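(* Let $\mathbf n=(n_1,\dots,n_r)$ and $\mathbf d=(d_1,\dots,d_r)$ be $r$-tuples of positive integers with $n_1\leq\dots\leq n_r$, and let $SV^{\mathbf n}_{\mathbf d}\subseteq\mathbb P^{N(\mathbf n,\mathbf d)}$, $N(\mathbf n,\mathbf d)=\prod_{i=1}^r\binom{n_i+d_i}{n_i}-1$, be the Segre–Veronese variety, i.e. the image of $\mathbb P^{n_1}\times\dots\times\mathbb P^{n_r}$ under the embedding given by $\mathcal O(d_1,\dots,d_r)$. If $h$ is a positive integer with $h\leq\lceil d_i/2\rceil$ for all $i=1,\dots,r$, then the Terracini locus $T_h(SV^{\mathbf n}_{\mathbf d})$ is empty.
   Context: For a smooth irreducible non-degenerate $X\subseteq\mathbb P^N$ of dimension $n$, the $h$-th Terracini locus $T_h(X)$ is the closure in $X^h/S_h$ of the set of unordered $h$-tuples of pairwise distinct points $x_1,\dots,x_h\in X$ with $\dim\langle T_{x_1}X,\dots,T_{x_h}X\rangle<\min\{hn+h-1,N\}$. *)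

theory Defs
  imports "HOL-Analysis.Analysis" "HOL-Library.Function_Algebras"
begin

text \<open>Segre--Veronese variety of P^{n_1} x ... x P^{n_r} embedded by O(d_1,...,d_r),
  over the complex numbers.  ns = [n_1,...,n_r], ds = [d_1,...,d_r].
  A point of the product is x :: nat => nat => complex, with x i = homogeneous
  coordinates (x i 0, ..., x i (n_i)) of the i-th factor (i < r).
  Coordinates of P^N are indexed by exponent tuples a, a i = exponent vector of
  degree d_i in the variables of the i-th factor (monomial basis).\<close>

definition sv_exps :: "nat list \<Rightarrow> nat list \<Rightarrow> (nat \<Rightarrow> nat \<Rightarrow> nat) set" where
  "sv_exps ns ds = {a. \<forall>i.
      (i < length ns \<longrightarrow> (\<forall>j. ns ! i < j \<longrightarrow> a i j = 0) \<and> (\<Sum>j\<le>ns ! i. a i j) = ds ! i)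
    \<and> (length ns \<le> i \<longrightarrow> (\<forall>j. a i j = 0))}"

text \<open>Affine-cone parametrisation of the Segre--Veronese variety (coordinates outside the
  index set are set to 0).\<close>
definition sv_coord :: "nat list \<Rightarrow> nat list \<Rightarrow> (nat \<Rightarrow> nat \<Rightarrow> complex) \<Rightarrow> (nat \<Rightarrow> nat \<Rightarrow> nat) \<Rightarrow> complex" where
  "sv_coord ns ds x a =
     (if a \<in> sv_exps ns ds then (\<Prod>i<length ns. \<Prod>j\<le>ns ! i. x i j ^ a i j) else 0)"

definition sv_valid :: "nat list \<Rightarrow> (nat \<Rightarrow> nat \<Rightarrow> complex) \<Rightarrow> bool" where
  "sv_valid ns x \<longleftrightarrow> (\<forall>i<length ns. \<exists>j\<le>ns ! i. x i j \<noteq> 0)"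

definition fscale :: "complex \<Rightarrow> ('i \<Rightarrow> complex) \<Rightarrow> ('i \<Rightarrow> complex)" where
  "fscale c f = (\<lambda>m. c * f m)"

text \<open>Linear space spanned by the embedded tangent space T_x X (cone over it): spanned by the
  partial derivatives of the parametrisation at x.\<close>
definition sv_tangent_gens :: "nat list \<Rightarrow> nat list \<Rightarrow> (nat \<Rightarrow> nat \<Rightarrow> complex) \<Rightarrow> ((nat \<Rightarrow> nat \<Rightarrow> nat) \<Rightarrow> complex) set" where
  "sv_tangent_gens ns ds x =
     {(\<lambda>a. deriv (\<lambda>t. sv_coord ns ds (x(i := (x i)(j := t))) a) (x i j)) | i j. i < length ns \<and> j \<le> ns ! i}"

definition proj_span_dim :: "((nat \<Rightarrow> nat \<Rightarrow> nat) \<Rightarrow> complex) set \<Rightarrow> int" where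
  "proj_span_dim V = int (vector_space.dim fscale V) - 1"

definition sv_n :: "nat list \<Rightarrow> nat" where "sv_n ns = sum_list ns"

definition sv_N :: "nat list \<Rightarrow> nat list \<Rightarrow> nat" where
  "sv_N ns ds = (\<Prod>i<length ns. (ns ! i + ds ! i) choose (ns ! i)) - 1"

text \<open>Ordered h-tuples (k < h) of pairwise distinct points of the variety violating the
  expected dimension of the span of tangent spaces.  The Terracini locus T_h is the closure
  of (the image in X^h/S_h of) this set; it is empty iff this set is empty.\<close>
definition terracini_tuples :: "nat list \<Rightarrow> nat list \<Rightarrow> nat \<Rightarrow> (nat \<Rightarrow> nat \<Rightarrow> nat \<Rightarrow> complex) set" where
  "terracini_tuples ns ds h = {x.
      (\<forall>k<h. sv_valid ns (x k))
    \<and> (\<forall>k<h. \<forall>l<h. k \<noteq> l \<longrightarrow> \<not> (\<exists>c. sv_coord ns ds (x l) = fscale c (sv_coord ns ds (x k))))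
    \<and> proj_span_dim (\<Union>k<h. sv_tangent_gens ns ds (x k))
        < min (int (h * sv_n ns + h) - 1) (int (sv_N ns ds))}"

end

theory Submission
  imports Defs
begin

text \<open>
  Let x_1, ..., x_h be pairwise distinct points of the Segre--Veronese variety. It suffices to
  find h(n+1) linearly independent vectors in the span of the affine tangent spaces: at each x_k
  the point itself (which lies in its tangent space by Euler's formula) and, for every factor i,
  the n_i partial derivatives in the directions of the coordinates other than a fixed nonzero one.

  Independence is tested against linear functionals coming from multihomogeneous forms F of
  multidegree d: F pairs with the point x_k to F(x_k) and with a tangent vector at x_k to a partial
  derivative of F at x_k. For each k let Q_k be the product of the squares of linear forms that
  vanish at x_l (l \<noteq> k) but not at x_k. It vanishes to second order at the other points, and its
  degree in the i-th factor is at most 2(h-1) \<le> d_i - 1, which is where h \<le> \<lceil>d_i/2\<rceil> enters.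
  Hence Q_k times a linear form vanishing at x_k, padded to multidegree d by factors not vanishing
  at x_k, isolates a single tangent vector at x_k, while Q_k alone, padded, isolates the point x_k
  from the other points; a triangular argument finishes the proof.
\<close>

section \<open>Finite sums and linear independence\<close>

lemma vector_space_mult: "vector_space ((*) :: 'a::field \<Rightarrow> 'a \<Rightarrow> 'a)"
  by unfold_locales (simp_all add: algebra_simps)

lemma sum_apply: "(\<Sum>a\<in>A. f a) x = (\<Sum>a\<in>A. f a x)"
  by (induction A rule: infinite_finite_induct) auto

lemma sum_regroup_image:
  fixes c :: "'p \<Rightarrow> 'c::comm_semiring_0"
  assumes "finite P" "finite E" "f ` P \<subseteq> E"
  shows "(\<Sum>p\<in>P. c p * m (f p)) = (\<Sum>a\<in>E. (\<Sum>p\<in>{p\<in>P. f p = a}. c p) * m a)"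
proof -
  have "(\<Sum>p\<in>P. c p * m (f p)) = (\<Sum>a\<in>E. \<Sum>p\<in>{p\<in>P. f p = a}. c p * m (f p))"
    by (rule sum.group[OF assms, symmetric])
  also have "\<dots> = (\<Sum>a\<in>E. (\<Sum>p\<in>{p\<in>P. f p = a}. c p) * m a)"
    by (auto simp: sum_distrib_right intro!: sum.cong)
  finally show ?thesis .
qed

context vector_space
begin

context
  fixes v :: "'c \<Rightarrow> 'b" and rk :: "'c \<Rightarrow> nat" and S :: "'c set"
  assumes dual: "\<And>s. s \<in> S \<Longrightarrow> \<exists>f. Vector_Spaces.linear scale (*) f \<and> f (v s) \<noteq> 0
                   \<and> (\<forall>t\<in>S - {s}. rk t \<le> rk s \<longrightarrow> f (v t) = 0)"
begin

lemma triangular_functionals_imp_inj_on: "inj_on v S"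
proof -
  have separated: "v s \<noteq> v t" if "s \<in> S" "t \<in> S" "s \<noteq> t" "rk t \<le> rk s" for s t
  proof -
    obtain f where "Vector_Spaces.linear scale (*) f" "f (v s) \<noteq> 0"
      and "\<forall>t\<in>S - {s}. rk t \<le> rk s \<longrightarrow> f (v t) = 0"
      using dual[OF \<open>s \<in> S\<close>] by blast
    with that show ?thesis by force
  qed
  show ?thesis
  proof (rule inj_onI, rule ccontr)
    fix s t assume st: "s \<in> S" "t \<in> S" "v s = v t" "s \<noteq> t"
    show False
    proof (cases "rk t \<le> rk s")
      case True
      then show False using separated[OF st(1,2,4)] st(3) by simp
    next
      case False
      then show False using separated[OF st(2,1) st(4)[symmetric]] st(3) by simp
    qed
  qed
qed

lemma triangular_functionals_imp_independent:
  assumes "finite S"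
  shows "independent (v ` S)"
proof (rule independent_if_scalars_zero)
  show "finite (v ` S)" using assms by simp
next
  fix c w assume comb: "(\<Sum>y\<in>v ` S. scale (c y) y) = 0" and "w \<in> v ` S"
  have "c (v s) = 0" if "s \<in> S" for s
    using that
  proof (induction "Max (rk ` S) - rk s" arbitrary: s rule: less_induct)
    case less
    obtain f where lin: "Vector_Spaces.linear scale (*) f" and fs: "f (v s) \<noteq> 0"
      and f0: "\<forall>t\<in>S - {s}. rk t \<le> rk s \<longrightarrow> f (v t) = 0"
      using dual[OF less.prems] by blast
    have higher: "c (v t) = 0" if "t \<in> S" "rk s < rk t" for t
    proof -
      have "rk t \<le> Max (rk ` S)" using assms that(1) by simp
      then show ?thesis by (intro less.hyps[OF _ that(1)]) (use that(2) in linarith)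
    qed
    have "0 = f (\<Sum>t\<in>S. scale (c (v t)) (v t))"
      using comb lin triangular_functionals_imp_inj_on
      by (simp add: sum.reindex linear_iff_module_hom module_hom.zero)
    also have "\<dots> = (\<Sum>t\<in>S. c (v t) * f (v t))"
      using lin by (simp add: linear_iff_module_hom module_hom.sum module_hom.scale)
    also have "\<dots> = (\<Sum>t\<in>S. if t = s then c (v s) * f (v s) else 0)"
    proof (rule sum.cong[OF refl])
      fix t assume "t \<in> S"
      then show "c (v t) * f (v t) = (if t = s then c (v s) * f (v s) else 0)"
        using f0 higher[OF \<open>t \<in> S\<close>] by (cases "rk t \<le> rk s") auto
    qed
    also have "\<dots> = c (v s) * f (v s)"
      using assms less.prems by simp
    finally show ?case using fs by simp
  qed
  then show "c w = 0" using \<open>w \<in> v ` S\<close> by blast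
qed

end

lemma card_le_dim_if_independent_in_span:
  assumes "finite V" "independent B" "B \<subseteq> span V"
  shows "card B \<le> dim V"
proof -
  obtain C where C: "C \<subseteq> span V" "independent C" "span V \<subseteq> span C" "card C = dim (span V)"
    using basis_exists by blast
  have "finite C" using independent_span_bound[OF assms(1) C(2,1)] by blast
  then have "card B \<le> card C"
    using independent_span_bound[OF _ assms(2)] assms(3) C(3) by blast
  then show ?thesis using C(4) by simp
qed

end

interpretation fscale: vector_space "fscale :: complex \<Rightarrow> ('i \<Rightarrow> complex) \<Rightarrow> 'i \<Rightarrow> complex"
  by unfold_locales (auto simp: fscale_def fun_eq_iff algebra_simps)

lemma linear_coefficient_pairing:
  "Vector_Spaces.linear fscale (*) (\<lambda>v. \<Sum>a\<in>E. c a * v a)"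
  unfolding Vector_Spaces.linear_iff
proof (intro conjI allI vector_space_mult fscale.vector_space_axioms)
  show "(\<Sum>a\<in>E. c a * (v + w) a) = (\<Sum>a\<in>E. c a * v a) + (\<Sum>a\<in>E. c a * w a)" for v w
    by (simp add: plus_fun_def sum.distrib distrib_left)
  show "(\<Sum>a\<in>E. c a * fscale r v a) = r * (\<Sum>a\<in>E. c a * v a)" for r v
    unfolding fscale_def sum_distrib_left by (simp add: mult.left_commute)
qed

section \<open>Monomials and tangent vectors of the Segre--Veronese variety\<close>

definition sv_monom :: "nat list \<Rightarrow> (nat \<Rightarrow> nat \<Rightarrow> complex) \<Rightarrow> (nat \<Rightarrow> nat \<Rightarrow> nat) \<Rightarrow> complex" where
  "sv_monom ns x a = (\<Prod>i<length ns. \<Prod>j\<le>ns ! i. x i j ^ a i j)"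

lemma sv_coord_eq_monom: "a \<in> sv_exps ns ds \<Longrightarrow> sv_coord ns ds x a = sv_monom ns x a"
  by (simp add: sv_coord_def sv_monom_def)

lemma sv_exps_le:
  assumes "a \<in> sv_exps ns ds" "i < length ns"
  shows "a i j \<le> ds ! i"
proof (cases "j \<le> ns ! i")
  case True
  then have "a i j \<le> (\<Sum>j\<le>ns ! i. a i j)" by (intro member_le_sum) auto
  then show ?thesis using assms unfolding sv_exps_def by auto
next
  case False
  then show ?thesis using assms unfolding sv_exps_def by auto
qed

lemma finite_sv_exps: "finite (sv_exps ns ds)"
proof -
  define K where "K = (\<Sum>i<length ns. ns ! i)"
  define M where "M = (\<Sum>i<length ns. ds ! i)"
  define F where "F = {g :: nat \<Rightarrow> nat. \<forall>j. (j \<in> {..K} \<longrightarrow> g j \<in> {..M}) \<and> (j \<notin> {..K} \<longrightarrow> g j = 0)}"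
  define G where "G = {a :: nat \<Rightarrow> nat \<Rightarrow> nat. \<forall>i. (i \<in> {..<length ns} \<longrightarrow> a i \<in> F) \<and> (i \<notin> {..<length ns} \<longrightarrow> a i = (\<lambda>_. 0))}"
  have "finite F" unfolding F_def by (rule finite_set_of_finite_funs) auto
  then have "finite G" unfolding G_def by (rule finite_set_of_finite_funs[rotated]) auto
  moreover have "sv_exps ns ds \<subseteq> G"
  proof
    fix a assume a: "a \<in> sv_exps ns ds"
    have "a i \<in> F" if i: "i < length ns" for i
    proof -
      have "ns ! i \<le> K" "ds ! i \<le> M"
        unfolding K_def M_def using i by (auto intro!: member_le_sum)
      moreover have "a i j \<le> M" for j
        using sv_exps_le[OF a i] \<open>ds ! i \<le> M\<close> order_trans by blast
      ultimately show ?thesis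
        using a i unfolding F_def sv_exps_def by (auto simp: not_le)
    qed
    then show "a \<in> G" using a unfolding G_def sv_exps_def by auto
  qed
  ultimately show ?thesis by (rule finite_subset[rotated])
qed

lemma sv_monom_factor:
  assumes "i < length ns" "j \<le> ns ! i"
  shows "sv_monom ns x a = x i j ^ a i j * sv_monom ns x (a(i := (a i)(j := 0)))"
proof -
  define a' where "a' = a(i := (a i)(j := 0))"
  have "x i' j' ^ a i' j' = (if i' = i then if j' = j then x i j ^ a i j else 1 else 1) * x i' j' ^ a' i' j'"
    for i' j' by (simp add: a'_def)
  then have "sv_monom ns x a = (\<Prod>i'<length ns. if i' = i then \<Prod>j'\<le>ns ! i'. if j' = j then x i j ^ a i j else 1 else 1)
      * sv_monom ns x a'"
    unfolding sv_monom_def prod.distrib[symmetric] by (intro prod.cong) (auto simp: prod.distrib)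
  also have "\<dots> = x i j ^ a i j * sv_monom ns x a'"
    using assms by simp
  finally show ?thesis unfolding a'_def .
qed

lemma sv_monom_incr:
  assumes "i < length ns" "j \<le> ns ! i"
  shows "sv_monom ns x (a(i := (a i)(j := Suc (a i j)))) = x i j * sv_monom ns x a"
  using sv_monom_factor[OF assms, of x a] sv_monom_factor[OF assms, of x "a(i := (a i)(j := Suc (a i j)))"]
  by simp

definition coord_line :: "(nat \<Rightarrow> nat \<Rightarrow> complex) \<Rightarrow> nat \<Rightarrow> nat \<Rightarrow> complex \<Rightarrow> nat \<Rightarrow> nat \<Rightarrow> complex" where
  "coord_line p i j t = p(i := (p i)(j := t))"

lemma coord_line_self [simp]: "coord_line p i j (p i j) = p"
  by (simp add: coord_line_def)

definition partial_deriv :: "((nat \<Rightarrow> nat \<Rightarrow> complex) \<Rightarrow> complex) \<Rightarrow> (nat \<Rightarrow> nat \<Rightarrow> complex) \<Rightarrow> nat \<Rightarrow> nat \<Rightarrow> complex" where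
  "partial_deriv G p i j = deriv (\<lambda>t. G (coord_line p i j t)) (p i j)"

definition sv_tangent :: "nat list \<Rightarrow> nat list \<Rightarrow> (nat \<Rightarrow> nat \<Rightarrow> complex) \<Rightarrow> nat \<Rightarrow> nat \<Rightarrow> (nat \<Rightarrow> nat \<Rightarrow> nat) \<Rightarrow> complex" where
  "sv_tangent ns ds p i j = (\<lambda>a. partial_deriv (\<lambda>y. sv_coord ns ds y a) p i j)"

lemma sv_tangent_gens_eq:
  "sv_tangent_gens ns ds p = {sv_tangent ns ds p i j | i j. i < length ns \<and> j \<le> ns ! i}"
  by (simp add: sv_tangent_gens_def sv_tangent_def partial_deriv_def coord_line_def)

lemma finite_sv_tangent_gens: "finite (sv_tangent_gens ns ds p)"
proof -
  have "sv_tangent_gens ns ds p = (\<lambda>(i, j). sv_tangent ns ds p i j) ` (SIGMA i:{..<length ns}. {..ns ! i})"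
    unfolding sv_tangent_gens_eq by auto
  then show ?thesis by simp
qed

lemma sv_monom_coord_line:
  assumes "i < length ns" "j \<le> ns ! i"
  shows "sv_monom ns (coord_line p i j t) a = t ^ a i j * sv_monom ns p (a(i := (a i)(j := 0)))"
proof -
  have "sv_monom ns (coord_line p i j t) (a(i := (a i)(j := 0))) = sv_monom ns p (a(i := (a i)(j := 0)))"
    unfolding sv_monom_def coord_line_def by (intro prod.cong refl) auto
  then show ?thesis
    using sv_monom_factor[OF assms, of "coord_line p i j t" a] by (simp add: coord_line_def)
qed

lemma has_field_derivative_sv_monom_coord_line:
  assumes "i < length ns" "j \<le> ns ! i"
  shows "((\<lambda>t. sv_monom ns (coord_line p i j t) a) has_field_derivative
            of_nat (a i j) * z ^ (a i j - 1) * sv_monom ns p (a(i := (a i)(j := 0)))) (at z)"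
  unfolding sv_monom_coord_line[OF assms] by (auto intro!: derivative_eq_intros)

lemma sv_euler:
  assumes "i < length ns"
  shows "(\<Sum>j\<le>ns ! i. fscale (p i j) (sv_tangent ns ds p i j)) = fscale (of_nat (ds ! i)) (sv_coord ns ds p)"
proof
  fix a
  show "(\<Sum>j\<le>ns ! i. fscale (p i j) (sv_tangent ns ds p i j)) a = fscale (of_nat (ds ! i)) (sv_coord ns ds p) a"
  proof (cases "a \<in> sv_exps ns ds")
    case False
    then show ?thesis
      by (simp add: sum_apply fscale_def sv_tangent_def partial_deriv_def sv_coord_def)
  next
    case True
    have "p i j * sv_tangent ns ds p i j a = of_nat (a i j) * sv_monom ns p a" if "j \<le> ns ! i" for j
    proof -
      have "sv_tangent ns ds p i j a
          = of_nat (a i j) * p i j ^ (a i j - 1) * sv_monom ns p (a(i := (a i)(j := 0)))"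
        unfolding sv_tangent_def partial_deriv_def sv_coord_eq_monom[OF True]
        by (rule DERIV_imp_deriv[OF has_field_derivative_sv_monom_coord_line[OF assms that]])
      then show ?thesis
        using sv_monom_factor[OF assms that, of p a] by (cases "a i j") (auto simp: algebra_simps)
    qed
    then have "(\<Sum>j\<le>ns ! i. p i j * sv_tangent ns ds p i j a) = of_nat (\<Sum>j\<le>ns ! i. a i j) * sv_monom ns p a"
      by (simp add: sum_distrib_right)
    also have "(\<Sum>j\<le>ns ! i. a i j) = ds ! i"
      using True assms unfolding sv_exps_def by auto
    finally show ?thesis
      using True by (simp add: fscale_def sv_coord_eq_monom sum_apply)
  qed
qed

lemma sv_coord_in_span_tangents:
  assumes "i < length ns" "0 < ds ! i"
  shows "sv_coord ns ds p \<in> fscale.span (sv_tangent_gens ns ds p)"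
proof -
  have "sv_coord ns ds p = fscale (1 / of_nat (ds ! i)) (fscale (of_nat (ds ! i)) (sv_coord ns ds p))"
    using assms(2) by (simp add: fscale_def)
  also have "\<dots> = fscale (1 / of_nat (ds ! i)) (\<Sum>j\<le>ns ! i. fscale (p i j) (sv_tangent ns ds p i j))"
    by (simp add: sv_euler[OF assms(1)])
  finally have euler: "sv_coord ns ds p = \<dots>" .
  have "sv_tangent ns ds p i j \<in> sv_tangent_gens ns ds p" if "j \<le> ns ! i" for j
    using assms(1) that unfolding sv_tangent_gens_eq by blast
  then show ?thesis
    unfolding euler by (intro fscale.span_scale fscale.span_sum fscale.span_base) auto
qed

section \<open>Products of linear forms\<close>

type_synonym lform = "nat \<times> (nat \<Rightarrow> complex)"

definition lform_eval :: "nat list \<Rightarrow> lform \<Rightarrow> (nat \<Rightarrow> nat \<Rightarrow> complex) \<Rightarrow> complex" where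
  "lform_eval ns q x = (\<Sum>j\<le>ns ! fst q. snd q j * x (fst q) j)"

definition lforms_prod :: "nat list \<Rightarrow> lform list \<Rightarrow> (nat \<Rightarrow> nat \<Rightarrow> complex) \<Rightarrow> complex" where
  "lforms_prod ns L x = (\<Prod>q\<leftarrow>L. lform_eval ns q x)"

lemma lforms_prod_Nil [simp]: "lforms_prod ns [] x = 1"
  and lforms_prod_Cons [simp]: "lforms_prod ns (q # L) x = lform_eval ns q x * lforms_prod ns L x"
  and lforms_prod_append [simp]: "lforms_prod ns (A @ B) x = lforms_prod ns A x * lforms_prod ns B x"
  by (simp_all add: lforms_prod_def)

lemma lforms_prod_nonzero: "\<forall>q\<in>set L. lform_eval ns q p \<noteq> 0 \<Longrightarrow> lforms_prod ns L p \<noteq> 0"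
  by (induction L) auto

definition lforms_degree :: "nat list \<Rightarrow> lform list \<Rightarrow> nat list" where
  "lforms_degree ns L = map (\<lambda>i. length (filter (\<lambda>q. fst q = i) L)) [0..<length ns]"

lemma length_lforms_degree [simp]: "length (lforms_degree ns L) = length ns"
  by (simp add: lforms_degree_def)

lemma lforms_degree_nth: "i < length ns \<Longrightarrow> lforms_degree ns L ! i = length (filter (\<lambda>q. fst q = i) L)"
  by (simp add: lforms_degree_def)

lemma lforms_degree_Cons:
  "i < length ns \<Longrightarrow> lforms_degree ns ((i, w) # L) = (lforms_degree ns L)[i := Suc (lforms_degree ns L ! i)]"
  by (intro nth_equalityI) (auto simp: lforms_degree_def nth_list_update)

lemma sv_exps_lforms_degree_Nil: "sv_exps ns (lforms_degree ns []) = {\<lambda>_ _. 0}"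
proof -
  have "a i j = 0" if "a \<in> sv_exps ns (lforms_degree ns [])" for a i j
    using that sv_exps_le[OF that, of i j] unfolding sv_exps_def
    by (cases "i < length ns") (auto simp: lforms_degree_def)
  moreover have "(\<lambda>_ _. 0) \<in> sv_exps ns (lforms_degree ns [])"
    unfolding sv_exps_def lforms_degree_def by auto
  ultimately show ?thesis by blast
qed

lemma incr_in_sv_exps:
  assumes "a \<in> sv_exps ns ds" "length ds = length ns" "i < length ns" "j \<le> ns ! i"
  shows "a(i := (a i)(j := Suc (a i j))) \<in> sv_exps ns (ds[i := Suc (ds ! i)])"
proof -
  have "(\<Sum>j'\<le>ns ! i. ((a i)(j := Suc (a i j))) j') = Suc (\<Sum>j'\<le>ns ! i. a i j')"
    using assms(4) by (simp add: sum.remove[of "{..ns ! i}" j])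
  then show ?thesis
    using assms unfolding sv_exps_def by (auto simp: nth_list_update)
qed

lemma lforms_prod_expansion:
  assumes "\<forall>q\<in>set L. fst q < length ns"
  shows "\<exists>c. \<forall>x. lforms_prod ns L x = (\<Sum>a\<in>sv_exps ns (lforms_degree ns L). c a * sv_monom ns x a)"
  using assms
proof (induction L)
  case Nil
  show ?case
    by (auto simp: sv_exps_lforms_degree_Nil sv_monom_def intro: exI[of _ "\<lambda>_. 1"])
next
  case (Cons q L)
  obtain i w where q: "q = (i, w)" by fastforce
  have i: "i < length ns" using Cons.prems q by simp
  obtain c where c: "\<And>x. lforms_prod ns L x = (\<Sum>a\<in>sv_exps ns (lforms_degree ns L). c a * sv_monom ns x a)"
    using Cons by auto
  define E where "E = sv_exps ns (lforms_degree ns L)"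
  define P where "P = {..ns ! i} \<times> E"
  define incr :: "nat \<times> (nat \<Rightarrow> nat \<Rightarrow> nat) \<Rightarrow> nat \<Rightarrow> nat \<Rightarrow> nat"
    where "incr = (\<lambda>(j, a). a(i := (a i)(j := Suc (a i j))))"
  have image: "incr ` P \<subseteq> sv_exps ns (lforms_degree ns (q # L))"
    using incr_in_sv_exps[of _ ns "lforms_degree ns L" i] i
    by (auto simp: incr_def P_def E_def q lforms_degree_Cons)
  have "finite P" by (simp add: P_def E_def finite_sv_exps)
  have expand: "lforms_prod ns (q # L) x = (\<Sum>p\<in>P. (w (fst p) * c (snd p)) * sv_monom ns x (incr p))" for x
  proof -
    have "lforms_prod ns (q # L) x = (\<Sum>j\<le>ns ! i. w j * x i j) * (\<Sum>a\<in>E. c a * sv_monom ns x a)"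
      by (simp add: lform_eval_def q c E_def)
    also have "\<dots> = (\<Sum>j\<le>ns ! i. \<Sum>a\<in>E. (w j * c a) * sv_monom ns x (incr (j, a)))"
      by (simp add: incr_def sum_product sv_monom_incr[OF i] mult_ac sum.swap[of _ E])
    also have "\<dots> = (\<Sum>p\<in>P. (w (fst p) * c (snd p)) * sv_monom ns x (incr p))"
      by (simp add: P_def sum.cartesian_product split_def)
    finally show ?thesis .
  qed
  show ?case
  proof (intro exI allI)
    fix x
    show "lforms_prod ns (q # L) x = (\<Sum>a\<in>sv_exps ns (lforms_degree ns (q # L)).
        (\<Sum>p\<in>{p\<in>P. incr p = a}. w (fst p) * c (snd p)) * sv_monom ns x a)"
      unfolding expand by (rule sum_regroup_image[OF \<open>finite P\<close> finite_sv_exps image])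
  qed
qed

lemma lform_eval_coord_line:
  "lform_eval ns q (coord_line p i j t)
     = lform_eval ns q p + (if fst q = i \<and> j \<le> ns ! i then snd q j * (t - p i j) else 0)"
proof (cases "fst q = i")
  case True
  have "coord_line p i j t i j' = p i j' + (if j' = j then t - p i j else 0)" for j'
    by (simp add: coord_line_def)
  then show ?thesis
    using True by (simp add: lform_eval_def distrib_left sum.distrib if_distrib[of "(*) _"] cong: if_cong)
next
  case False
  then show ?thesis by (simp add: lform_eval_def coord_line_def)
qed

lemma has_field_derivative_lform_eval_coord_line:
  "((\<lambda>t. lform_eval ns q (coord_line p i j t)) has_field_derivative
      (if fst q = i \<and> j \<le> ns ! i then snd q j else 0)) (at z)"
  unfolding lform_eval_coord_line by (auto intro!: derivative_eq_intros)

lemma lforms_prod_coord_line_differentiable: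
  "(\<lambda>t. lforms_prod ns L (coord_line p i j t)) field_differentiable (at z)"
proof (induction L)
  case Nil
  show ?case by simp
next
  case (Cons q L)
  have "(\<lambda>t. lform_eval ns q (coord_line p i j t)) field_differentiable (at z)"
    using has_field_derivative_lform_eval_coord_line unfolding field_differentiable_def by blast
  with Cons.IH show ?case by (simp add: field_differentiable_mult)
qed

lemma partial_deriv_lforms_prod_Cons_root:
  assumes "lform_eval ns q p = 0"
  shows "partial_deriv (lforms_prod ns (q # R)) p i j
           = (if fst q = i \<and> j \<le> ns ! i then snd q j else 0) * lforms_prod ns R p"
proof -
  have "((\<lambda>t. lforms_prod ns (q # R) (coord_line p i j t)) has_field_derivative
          (if fst q = i \<and> j \<le> ns ! i then snd q j else 0) * lforms_prod ns R p) (at (p i j))"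
    using DERIV_mult[OF has_field_derivative_lform_eval_coord_line[of ns q p i j "p i j"]
        field_differentiable_derivI[OF lforms_prod_coord_line_differentiable[of ns R p i j "p i j"]]] assms
    by simp
  then show ?thesis
    unfolding partial_deriv_def by (rule DERIV_imp_deriv)
qed

lemma length_concat_doubles: "length (concat (map (\<lambda>q. [q, q]) Q)) = 2 * length Q"
  by (induction Q) auto

lemma lforms_prod_double_root:
  fixes A B Q :: "lform list"
  assumes "q \<in> set Q" "lform_eval ns q p = 0"
  defines "L \<equiv> A @ concat (map (\<lambda>q. [q, q]) Q) @ B"
  shows "lforms_prod ns L p = 0" and "partial_deriv (lforms_prod ns L) p i j = 0"
proof -
  obtain Q1 Q2 where "Q = Q1 @ q # Q2"
    using split_list[OF assms(1)] by blast
  then have L: "lforms_prod ns L = lforms_prod ns (q # q # A @ concat (map (\<lambda>q. [q, q]) (Q1 @ Q2)) @ B)"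
    unfolding L_def by (simp add: fun_eq_iff mult_ac)
  show "lforms_prod ns L p = 0"
    unfolding L using assms(2) by simp
  show "partial_deriv (lforms_prod ns L) p i j = 0"
    unfolding L partial_deriv_lforms_prod_Cons_root[OF assms(2)] using assms(2) by simp
qed

lemma lforms_functional:
  assumes "\<forall>q\<in>set L. fst q < length ns" "lforms_degree ns L = ds"
  shows "\<exists>\<phi>. Vector_Spaces.linear fscale (*) \<phi>
           \<and> (\<forall>p. \<phi> (sv_coord ns ds p) = lforms_prod ns L p)
           \<and> (\<forall>p i j. i < length ns \<longrightarrow> j \<le> ns ! i \<longrightarrow>
                 \<phi> (sv_tangent ns ds p i j) = partial_deriv (lforms_prod ns L) p i j)"
proof -
  define E where "E = sv_exps ns ds"
  obtain c where c: "\<And>x. lforms_prod ns L x = (\<Sum>a\<in>E. c a * sv_monom ns x a)"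
    using lforms_prod_expansion[OF assms(1)] unfolding assms(2) E_def by blast
  define \<phi> where "\<phi> v = (\<Sum>a\<in>E. c a * v a)" for v :: "(nat \<Rightarrow> nat \<Rightarrow> nat) \<Rightarrow> complex"
  have "\<phi> (sv_tangent ns ds p i j) = partial_deriv (lforms_prod ns L) p i j"
    if ij: "i < length ns" "j \<le> ns ! i" for p i j
  proof -
    have diff: "(\<lambda>t. sv_monom ns (coord_line p i j t) a) field_differentiable (at z)" for a z
      using has_field_derivative_sv_monom_coord_line[OF ij] unfolding field_differentiable_def by blast
    have "partial_deriv (lforms_prod ns L) p i j
        = deriv (\<lambda>t. \<Sum>a\<in>E. c a * sv_monom ns (coord_line p i j t) a) (p i j)"
      by (simp add: partial_deriv_def c)
    also have "\<dots> = (\<Sum>a\<in>E. c a * deriv (\<lambda>t. sv_monom ns (coord_line p i j t) a) (p i j))"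
      by (simp add: deriv_cmult diff field_differentiable_mult)
    also have "\<dots> = \<phi> (sv_tangent ns ds p i j)"
      by (simp add: \<phi>_def sv_tangent_def partial_deriv_def E_def sv_coord_eq_monom cong: sum.cong)
    finally show ?thesis ..
  qed
  moreover have "\<phi> (sv_coord ns ds p) = lforms_prod ns L p" for p
    by (simp add: \<phi>_def c E_def sv_coord_eq_monom)
  ultimately show ?thesis
    using linear_coefficient_pairing[where E = E and c = c] unfolding \<phi>_def by blast
qed

lemma length_filter_concat_replicate:
  "length (filter (\<lambda>q. fst q = i) (concat (map (\<lambda>i'. replicate (m i') (i', v i')) [0..<r])))
     = (if i < r then m i else 0)"
  by (induction r) (auto simp: filter_replicate less_Suc_eq)

lemma lforms_padding:
  assumes "sv_valid ns p" "length ds = length ns"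
    and "\<forall>i<length ns. lforms_degree ns L ! i \<le> ds ! i"
  shows "\<exists>P. (\<forall>q\<in>set P. fst q < length ns \<and> lform_eval ns q p \<noteq> 0) \<and> lforms_degree ns (L @ P) = ds"
proof -
  obtain b where b: "\<And>i. i < length ns \<Longrightarrow> b i \<le> ns ! i \<and> p i (b i) \<noteq> 0"
    using assms(1) unfolding sv_valid_def by metis
  define e where "e i = (\<lambda>j. if j = b i then 1 else 0 :: complex)" for i
  have e_eval: "lform_eval ns (i, e i) p = p i (b i)" if "i < length ns" for i
  proof -
    have "lform_eval ns (i, e i) p = (\<Sum>j\<le>ns ! i. if j = b i then p i j else 0)"
      unfolding lform_eval_def by (intro sum.cong) (auto simp: e_def)
    then show ?thesis using b[OF that] by simp
  qed
  define P where "P = concat (map (\<lambda>i. replicate (ds ! i - lforms_degree ns L ! i) (i, e i)) [0..<length ns])"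
  have "\<forall>q\<in>set P. fst q < length ns \<and> lform_eval ns q p \<noteq> 0"
    using b e_eval by (auto simp: P_def)
  moreover have "lforms_degree ns (L @ P) = ds"
  proof (rule nth_equalityI)
    fix i assume "i < length (lforms_degree ns (L @ P))"
    then have "i < length ns" by simp
    then show "lforms_degree ns (L @ P) ! i = ds ! i"
      using assms(3) by (simp add: lforms_degree_nth P_def length_filter_concat_replicate)
  qed (simp add: assms(2))
  ultimately show ?thesis by blast
qed

lemma exists_functional_separating:
  fixes u v :: "nat \<Rightarrow> 'a::field"
  assumes "\<exists>j\<le>n. u j \<noteq> 0" "\<not> (\<exists>\<mu>. \<forall>j\<le>n. v j = \<mu> * u j)"
  shows "\<exists>w. (\<Sum>j\<le>n. w j * v j) = 0 \<and> (\<Sum>j\<le>n. w j * u j) \<noteq> 0"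
proof -
  obtain j0 where j0: "j0 \<le> n" "u j0 \<noteq> 0" using assms(1) by blast
  obtain j1 where j1: "j1 \<le> n" "v j1 \<noteq> v j0 / u j0 * u j1"
    using assms(2) by blast
  then have "j1 \<noteq> j0" using j0 by auto
  define w where "w j = (if j = j0 then v j1 else if j = j1 then - v j0 else 0)" for j
  have pair: "(\<Sum>j\<le>n. w j * f j) = v j1 * f j0 - v j0 * f j1" for f :: "nat \<Rightarrow> 'a"
  proof -
    have "(\<Sum>j\<le>n. w j * f j) = (\<Sum>j\<le>n. (if j = j0 then v j1 * f j0 else 0) + (if j = j1 then - v j0 * f j1 else 0))"
      using \<open>j1 \<noteq> j0\<close> by (intro sum.cong) (auto simp: w_def)
    then show ?thesis using j0 j1 by (simp add: sum.distrib)
  qed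
  have "(\<Sum>j\<le>n. w j * v j) = 0"
    unfolding pair by (simp add: mult.commute)
  moreover have "(\<Sum>j\<le>n. w j * u j) = u j0 * (v j1 - v j0 / u j0 * u j1)"
    unfolding pair using j0 by (simp add: field_simps)
  then have "(\<Sum>j\<le>n. w j * u j) \<noteq> 0"
    using j0 j1 by simp
  ultimately show ?thesis by blast
qed

lemma sv_coord_proportional:
  assumes "\<forall>i<length ns. \<exists>\<mu>. \<forall>j\<le>ns ! i. y i j = \<mu> * x i j"
  shows "\<exists>c. sv_coord ns ds y = fscale c (sv_coord ns ds x)"
proof -
  obtain \<mu> where \<mu>: "\<forall>i<length ns. \<forall>j\<le>ns ! i. y i j = \<mu> i * x i j"
    using assms by metis
  define c where "c = (\<Prod>i<length ns. \<mu> i ^ ds ! i)"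
  have "sv_coord ns ds y a = c * sv_coord ns ds x a" for a
  proof (cases "a \<in> sv_exps ns ds")
    case True
    have "sv_monom ns y a = (\<Prod>i<length ns. \<Prod>j\<le>ns ! i. \<mu> i ^ a i j * x i j ^ a i j)"
      unfolding sv_monom_def using \<mu> by (intro prod.cong refl) (auto simp: power_mult_distrib)
    also have "\<dots> = (\<Prod>i<length ns. \<mu> i ^ (\<Sum>j\<le>ns ! i. a i j) * (\<Prod>j\<le>ns ! i. x i j ^ a i j))"
      by (simp add: prod.distrib power_sum)
    also have "\<dots> = c * sv_monom ns x a"
      unfolding c_def sv_monom_def prod.distrib[symmetric]
      using True unfolding sv_exps_def by (intro prod.cong refl) auto
    finally show ?thesis using True by (simp add: sv_coord_eq_monom)
  next
    case False
    then show ?thesis by (simp add: sv_coord_def)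
  qed
  then show ?thesis by (auto simp: fscale_def)
qed

lemma exists_lform_separating:
  assumes "sv_valid ns x" "\<not> (\<exists>c. sv_coord ns ds y = fscale c (sv_coord ns ds x))"
  shows "\<exists>q. fst q < length ns \<and> lform_eval ns q y = 0 \<and> lform_eval ns q x \<noteq> 0"
proof -
  obtain i where i: "i < length ns" and "\<not> (\<exists>\<mu>. \<forall>j\<le>ns ! i. y i j = \<mu> * x i j)"
    using sv_coord_proportional assms(2) by blast
  moreover have "\<exists>j\<le>ns ! i. x i j \<noteq> 0"
    using assms(1) i unfolding sv_valid_def by blast
  ultimately obtain w where "(\<Sum>j\<le>ns ! i. w j * y i j) = 0" "(\<Sum>j\<le>ns ! i. w j * x i j) \<noteq> 0"
    using exists_functional_separating by blast
  with i show ?thesis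
    by (intro exI[of _ "(i, w)"]) (simp add: lform_eval_def)
qed

section \<open>Independent vectors in the span of few tangent spaces\<close>

locale sv_few_points =
  fixes ns ds :: "nat list" and h :: nat and x :: "nat \<Rightarrow> nat \<Rightarrow> nat \<Rightarrow> complex"
  assumes length_ds: "length ds = length ns"
    and factors_nonempty: "0 < length ns"
    and degrees_pos: "\<And>i. i < length ns \<Longrightarrow> 0 < ds ! i"
    and degree_bound: "\<And>i. i < length ns \<Longrightarrow> 2 * h \<le> ds ! i + 1"
    and valid: "\<And>k. k < h \<Longrightarrow> sv_valid ns (x k)"
    and nonproportional:
      "\<And>k l. k < h \<Longrightarrow> l < h \<Longrightarrow> k \<noteq> l \<Longrightarrow> \<not> (\<exists>c. sv_coord ns ds (x l) = fscale c (sv_coord ns ds (x k)))"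
begin

definition base :: "nat \<Rightarrow> nat \<Rightarrow> nat" where
  "base k i = (SOME j. j \<le> ns ! i \<and> x k i j \<noteq> 0)"

lemma base: "k < h \<Longrightarrow> i < length ns \<Longrightarrow> base k i \<le> ns ! i \<and> x k i (base k i) \<noteq> 0"
  unfolding base_def by (rule someI_ex) (use valid in \<open>auto simp: sv_valid_def\<close>)

definition separator :: "nat \<Rightarrow> nat \<Rightarrow> lform" where
  "separator k l = (SOME q. fst q < length ns \<and> lform_eval ns q (x l) = 0 \<and> lform_eval ns q (x k) \<noteq> 0)"

lemma separator:
  assumes "k < h" "l < h" "k \<noteq> l"
  shows "fst (separator k l) < length ns \<and> lform_eval ns (separator k l) (x l) = 0
           \<and> lform_eval ns (separator k l) (x k) \<noteq> 0"
  unfolding separator_def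
  by (rule someI_ex, rule exists_lform_separating) (use assms valid nonproportional in auto)

definition squares :: "nat \<Rightarrow> lform list" where
  "squares k = concat (map (\<lambda>q. [q, q]) (map (separator k) (filter (\<lambda>l. l \<noteq> k) [0..<h])))"

lemma squares_vanish:
  assumes "k < h" "l < h" "l \<noteq> k"
  shows "lforms_prod ns (A @ squares k @ B) (x l) = 0"
    and "partial_deriv (lforms_prod ns (A @ squares k @ B)) (x l) i j = 0"
  using lforms_prod_double_root[of "separator k l" "map (separator k) (filter (\<lambda>l. l \<noteq> k) [0..<h])"]
    separator[OF assms(1,2) assms(3)[symmetric]] assms
  unfolding squares_def by auto

lemma squares_nonzero:
  "k < h \<Longrightarrow> q \<in> set (squares k) \<Longrightarrow> fst q < length ns \<and> lform_eval ns q (x k) \<noteq> 0"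
  using separator unfolding squares_def by auto

lemma squares_degree:
  assumes "k < h" "i < length ns"
  shows "lforms_degree ns (squares k) ! i < ds ! i"
proof -
  have "lforms_degree ns (squares k) ! i \<le> length (squares k)"
    unfolding lforms_degree_nth[OF assms(2)] by (rule length_filter_le)
  also have "\<dots> = 2 * length (filter (\<lambda>l. l \<noteq> k) [0..<h])"
    unfolding squares_def length_concat_doubles by simp
  finally have "lforms_degree ns (squares k) ! i \<le> 2 * length (filter (\<lambda>l. l \<noteq> k) [0..<h])" .
  moreover have "length (filter (\<lambda>l. l \<noteq> k) [0..<h]) < h"
    using length_filter_less[of k "[0..<h]"] assms(1) by simp
  ultimately show ?thesis using degree_bound[OF assms(2)] by linarith
qed

definition index_set :: "(nat \<times> (nat \<times> nat) option) set" where
  "index_set = (\<lambda>k. (k, None)) ` {..<h}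
     \<union> (\<lambda>(k, i, j). (k, Some (i, j))) ` (SIGMA k:{..<h}. SIGMA i:{..<length ns}. {..ns ! i} - {base k i})"

lemma point_in_index_set [simp]: "(k, None) \<in> index_set \<longleftrightarrow> k < h"
  and tangent_in_index_set [simp]:
    "(k, Some (i, j)) \<in> index_set \<longleftrightarrow> k < h \<and> i < length ns \<and> j \<le> ns ! i \<and> j \<noteq> base k i"
  by (auto simp: index_set_def) force

lemma finite_index_set: "finite index_set"
  by (simp add: index_set_def)

lemma card_index_set: "card index_set = h * sv_n ns + h"
proof -
  define T where "T = (SIGMA k:{..<h}. SIGMA i:{..<length ns}. {..ns ! i} - {base k i})"
  have "card T = (\<Sum>k<h. \<Sum>i<length ns. card ({..ns ! i} - {base k i}))"
    unfolding T_def by simp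
  also have "\<dots> = (\<Sum>k<h. \<Sum>i<length ns. ns ! i)"
    using base by (intro sum.cong refl) simp
  also have "\<dots> = h * sv_n ns"
    by (simp add: sv_n_def sum_list_sum_nth atLeast0LessThan)
  finally have "card ((\<lambda>(k, i, j). (k, Some (i, j))) ` T) = h * sv_n ns"
    by (subst card_image) (auto simp: inj_on_def)
  moreover have "card ((\<lambda>k. (k, None :: (nat \<times> nat) option)) ` {..<h}) = h"
    by (subst card_image) (auto simp: inj_on_def)
  ultimately show ?thesis
    unfolding index_set_def T_def[symmetric]
    by (subst card_Un_disjoint) (auto simp: T_def)
qed

definition vec :: "nat \<times> (nat \<times> nat) option \<Rightarrow> (nat \<Rightarrow> nat \<Rightarrow> nat) \<Rightarrow> complex" where
  "vec s = (case s of (k, None) \<Rightarrow> sv_coord ns ds (x k) | (k, Some (i, j)) \<Rightarrow> sv_tangent ns ds (x k) i j)"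

lemma vec_simps [simp]:
  "vec (k, None) = sv_coord ns ds (x k)"
  "vec (k, Some (i, j)) = sv_tangent ns ds (x k) i j"
  by (simp_all add: vec_def)

lemma vec_in_span_tangents: "vec ` index_set \<subseteq> fscale.span (\<Union>k<h. sv_tangent_gens ns ds (x k))"
proof (rule subsetI, elim imageE)
  fix v s assume "s \<in> index_set" "v = vec s"
  define V where "V = (\<Union>k<h. sv_tangent_gens ns ds (x k))"
  have gens: "sv_tangent_gens ns ds (x k) \<subseteq> V" if "k < h" for k
    using that by (auto simp: V_def)
  show "v \<in> fscale.span V"
  proof (cases s)
    case (Pair k ij)
    show ?thesis
    proof (cases ij)
      case None
      have "sv_coord ns ds (x k) \<in> fscale.span (sv_tangent_gens ns ds (x k))"
        using sv_coord_in_span_tangents factors_nonempty degrees_pos by blast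
      moreover have "k < h" using \<open>s \<in> index_set\<close> Pair None by simp
      ultimately show ?thesis
        using fscale.span_mono[OF gens] \<open>v = vec s\<close> Pair None by auto
    next
      case (Some ij')
      then obtain i j where "s = (k, Some (i, j))" using Pair by (cases ij') auto
      then show ?thesis
        using \<open>s \<in> index_set\<close> \<open>v = vec s\<close> gens
        by (auto simp: sv_tangent_gens_eq intro!: fscale.span_base)
    qed
  qed
qed

lemma functional_at_point:
  assumes "k < h" "\<forall>q\<in>set A. fst q < length ns"
    and "\<forall>i<length ns. lforms_degree ns (A @ squares k) ! i \<le> ds ! i"
  obtains \<phi> P where "Vector_Spaces.linear fscale (*) \<phi>" "\<forall>q\<in>set P. lform_eval ns q (x k) \<noteq> 0"
    and "\<phi> (vec (k, None)) = lforms_prod ns (A @ squares k @ P) (x k)"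
    and "\<And>i j. (k, Some (i, j)) \<in> index_set \<Longrightarrow>
           \<phi> (vec (k, Some (i, j))) = partial_deriv (lforms_prod ns (A @ squares k @ P)) (x k) i j"
    and "\<And>s. s \<in> index_set \<Longrightarrow> fst s \<noteq> k \<Longrightarrow> \<phi> (vec s) = 0"
proof -
  obtain P where P: "\<forall>q\<in>set P. fst q < length ns \<and> lform_eval ns q (x k) \<noteq> 0"
    and degree: "lforms_degree ns ((A @ squares k) @ P) = ds"
    using lforms_padding[OF valid[OF assms(1)] length_ds assms(3)] by blast
  define L where "L = A @ squares k @ P"
  have "\<forall>q\<in>set L. fst q < length ns"
    using assms(2) P squares_nonzero[OF assms(1)] by (auto simp: L_def)
  then obtain \<phi> where lin: "Vector_Spaces.linear fscale (*) \<phi>"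
    and coord: "\<And>p. \<phi> (sv_coord ns ds p) = lforms_prod ns L p"
    and tangent: "\<And>p i j. i < length ns \<Longrightarrow> j \<le> ns ! i \<Longrightarrow>
                    \<phi> (sv_tangent ns ds p i j) = partial_deriv (lforms_prod ns L) p i j"
    using lforms_functional[of L ns ds] degree by (auto simp: L_def)
  have "\<phi> (vec s) = 0" if "s \<in> index_set" "fst s \<noteq> k" for s
  proof (cases s)
    case (Pair l ij)
    then have l: "l < h" "l \<noteq> k"
      using that by (cases ij; auto)+
    show ?thesis
    proof (cases ij)
      case None
      then show ?thesis
        using squares_vanish(1)[OF assms(1) l, of A P] Pair by (simp add: coord L_def del: lforms_prod_append)
    next
      case (Some ij')
      then obtain i j where "s = (l, Some (i, j))" using Pair by (cases ij') auto
      then show ?thesis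
        using that squares_vanish(2)[OF assms(1) l, of A P] by (simp add: tangent L_def)
    qed
  qed
  with lin P show thesis
    by (intro that[of \<phi> P]) (auto simp: coord tangent L_def)
qed

lemma point_functional:
  assumes "k < h"
  shows "\<exists>\<phi>. Vector_Spaces.linear fscale (*) \<phi> \<and> \<phi> (vec (k, None)) \<noteq> 0
            \<and> (\<forall>t\<in>index_set. fst t \<noteq> k \<longrightarrow> \<phi> (vec t) = 0)"
proof -
  have degree: "\<forall>i<length ns. lforms_degree ns ([] @ squares k) ! i \<le> ds ! i"
    using squares_degree[OF assms] by (simp add: less_imp_le)
  obtain \<phi> P where "Vector_Spaces.linear fscale (*) \<phi>" "\<forall>q\<in>set P. lform_eval ns q (x k) \<noteq> 0"
    and "\<phi> (vec (k, None)) = lforms_prod ns ([] @ squares k @ P) (x k)"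
    and "\<And>s. s \<in> index_set \<Longrightarrow> fst s \<noteq> k \<Longrightarrow> \<phi> (vec s) = 0"
    by (rule functional_at_point[OF assms _ degree]) auto
  moreover have "lforms_prod ns (squares k @ P) (x k) \<noteq> 0"
    using calculation(2) squares_nonzero[OF assms] by (intro lforms_prod_nonzero) auto
  ultimately show ?thesis by auto
qed

text \<open>The coefficient at the base coordinate makes the form vanish at x k.\<close>
definition tangent_dual :: "nat \<Rightarrow> nat \<Rightarrow> nat \<Rightarrow> lform" where
  "tangent_dual k i j =
     (i, \<lambda>j'. if j' = j then 1 else if j' = base k i then - x k i j / x k i (base k i) else 0)"

lemma tangent_dual_root:
  assumes "(k, Some (i, j)) \<in> index_set"
  shows "lform_eval ns (tangent_dual k i j) (x k) = 0"
proof -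
  have b: "base k i \<le> ns ! i" "x k i (base k i) \<noteq> 0" "j \<le> ns ! i" "j \<noteq> base k i"
    using assms base by auto
  have "lform_eval ns (tangent_dual k i j) (x k)
      = (\<Sum>j'\<le>ns ! i. (if j' = j then x k i j else 0)
            + (if j' = base k i then - x k i j / x k i (base k i) * x k i (base k i) else 0))"
    unfolding lform_eval_def tangent_dual_def using b(4) by (intro sum.cong) auto
  also have "\<dots> = 0"
    using b by (simp add: sum.distrib)
  finally show ?thesis .
qed

lemma tangent_dual_degree:
  assumes "k < h"
  shows "\<forall>i'<length ns. lforms_degree ns ([tangent_dual k i j] @ squares k) ! i' \<le> ds ! i'"
proof (intro allI impI)
  fix i' assume "i' < length ns"
  then show "lforms_degree ns ([tangent_dual k i j] @ squares k) ! i' \<le> ds ! i'"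
    using squares_degree[OF assms \<open>i' < length ns\<close>] by (simp add: lforms_degree_nth tangent_dual_def)
qed

lemma tangent_functional:
  assumes s: "(k, Some (i, j)) \<in> index_set"
  shows "\<exists>\<phi>. Vector_Spaces.linear fscale (*) \<phi> \<and> \<phi> (vec (k, Some (i, j))) \<noteq> 0
            \<and> (\<forall>t\<in>index_set - {(k, Some (i, j))}. \<phi> (vec t) = 0)"
proof -
  have k: "k < h" and i: "i < length ns" using s by auto
  define d where "d = tangent_dual k i j"
  obtain \<phi> P where lin: "Vector_Spaces.linear fscale (*) \<phi>"
    and P: "\<forall>q\<in>set P. lform_eval ns q (x k) \<noteq> 0"
    and point: "\<phi> (vec (k, None)) = lforms_prod ns ([d] @ squares k @ P) (x k)"
    and tangent: "\<And>i j. (k, Some (i, j)) \<in> index_set \<Longrightarrow>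
        \<phi> (vec (k, Some (i, j))) = partial_deriv (lforms_prod ns ([d] @ squares k @ P)) (x k) i j"
    and others: "\<And>s. s \<in> index_set \<Longrightarrow> fst s \<noteq> k \<Longrightarrow> \<phi> (vec s) = 0"
    by (rule functional_at_point[OF k _ tangent_dual_degree[OF k, of i j, folded d_def]])
      (auto simp: i d_def tangent_dual_def)
  have root: "lform_eval ns d (x k) = 0"
    unfolding d_def by (rule tangent_dual_root[OF s])
  define R where "R = lforms_prod ns (squares k @ P) (x k)"
  have "R \<noteq> 0"
    unfolding R_def using P squares_nonzero[OF k] by (intro lforms_prod_nonzero) auto
  have tangent': "\<phi> (vec (k, Some (i', j'))) = (if (i', j') = (i, j) then R else 0)"
    if "(k, Some (i', j')) \<in> index_set" for i' j'
    using that tangent[OF that] partial_deriv_lforms_prod_Cons_root[OF root]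
    by (auto simp: R_def d_def tangent_dual_def)
  have vanish: "\<phi> (vec t) = 0" if "t \<in> index_set - {(k, Some (i, j))}" for t
  proof (cases "fst t = k")
    case True
    then obtain ij where t: "t = (k, ij)" by (metis prod.collapse)
    show ?thesis
    proof (cases ij)
      case None
      then show ?thesis using t point root by simp
    next
      case (Some ij')
      then show ?thesis using that t tangent' by (cases ij') auto
    qed
  qed (use that others in auto)
  moreover have "\<phi> (vec (k, Some (i, j))) \<noteq> 0"
    using tangent'[OF s] \<open>R \<noteq> 0\<close> by simp
  ultimately show ?thesis
    using lin by blast
qed

theorem dim_span_tangents_ge: "h * sv_n ns + h \<le> fscale.dim (\<Union>k<h. sv_tangent_gens ns ds (x k))"
proof -
  \<comment> \<open>The functional isolating a point need not vanish on the tangent vectors at that point.\<close>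
  define level :: "nat \<times> (nat \<times> nat) option \<Rightarrow> nat" where "level s = (if snd s = None then 0 else 1)" for s
  have dual: "\<exists>\<phi>. Vector_Spaces.linear fscale (*) \<phi> \<and> \<phi> (vec s) \<noteq> 0
          \<and> (\<forall>t\<in>index_set - {s}. level t \<le> level s \<longrightarrow> \<phi> (vec t) = 0)"
    if "s \<in> index_set" for s
  proof (cases s)
    case (Pair k ij)
    show ?thesis
    proof (cases ij)
      case None
      with point_functional[of k] that Pair show ?thesis
        by (force simp: level_def)
    next
      case (Some ij')
      with tangent_functional[of k "fst ij'" "snd ij'"] that Pair show ?thesis
        by auto
    qed
  qed
  have "inj_on vec index_set"
    using fscale.triangular_functionals_imp_inj_on[OF dual] .
  moreover have "fscale.independent (vec ` index_set)"
    using fscale.triangular_functionals_imp_independent[OF dual finite_index_set] .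
  moreover have "finite (\<Union>k<h. sv_tangent_gens ns ds (x k))"
    by (simp add: finite_sv_tangent_gens)
  ultimately have "card (vec ` index_set) \<le> fscale.dim (\<Union>k<h. sv_tangent_gens ns ds (x k))"
    using fscale.card_le_dim_if_independent_in_span vec_in_span_tangents by blast
  then show ?thesis
    using card_image[OF \<open>inj_on vec index_set\<close>] card_index_set by simp
qed

end

theorem corollary4p3:
  fixes ns ds :: "nat list" and h :: nat
  assumes "0 < length ns" and "length ds = length ns"
    and "\<forall>i<length ns. 0 < ns ! i \<and> 0 < ds ! i"
    and "sorted ns"
    and "0 < h"
    and "\<forall>i<length ds. of_nat h \<le> \<lceil>real (ds ! i) / 2\<rceil>"
  shows "terracini_tuples ns ds h = {}"
proof (rule equals0I)
  fix x assume "x \<in> terracini_tuples ns ds h"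
  then have valid: "\<forall>k<h. sv_valid ns (x k)"
    and distinct: "\<forall>k<h. \<forall>l<h. k \<noteq> l \<longrightarrow> \<not> (\<exists>c. sv_coord ns ds (x l) = fscale c (sv_coord ns ds (x k)))"
    and defective: "proj_span_dim (\<Union>k<h. sv_tangent_gens ns ds (x k)) < int (h * sv_n ns + h) - 1"
    unfolding terracini_tuples_def by auto
  have "2 * h \<le> ds ! i + 1" if "i < length ns" for i
  proof -
    have "of_nat h \<le> \<lceil>real (ds ! i) / 2\<rceil>" using assms(2,6) that by simp
    then show ?thesis by linarith
  qed
  interpret sv_few_points ns ds h x
    using assms(1-3) valid distinct \<open>\<And>i. i < length ns \<Longrightarrow> 2 * h \<le> ds ! i + 1\<close>
    by unfold_locales auto
  show False
    using dim_span_tangents_ge defective unfolding proj_span_dim_def by linarith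
qed

end
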